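(* Let $\mathcal{G}=(\mathcal{V},E)$ be an undirected graph, $\mathcal{V}=\{1,\dots,N\}$, and let $X=(X_1,\dots,X_N)$ be a Markov random field on $\mathcal{G}$ with each $X_i$ taking values in a finite alphabet $\mathcal{X}_i$. Let $g_i:\mathcal{X}_i\to\mathcal{Y}_i$ be functions and $Y_i=g_i(X_i)$, $Y=(Y_1,\dots,Y_N)$. If for every $i\in\mathcal{V}$ $$H(Y_i\mid Y_{\mathcal{N}_i})=H(Y_i\mid X_{\mathcal{N}_i}),$$ then $Y$ is a Markov random field on $\mathcal{G}$.
   Context: $\mathcal{N}_i=\{j\neq i:\{i,j\}\in E\}$; for $A\subseteq\mathcal{V}$, $X_A=(X_j,j\in A)$. $X$ is a Markov random field on $\mathcal{G}$ if for every $i$, $p_{X_i|X_{\mathcal{V}\setminus\{i\}}}=p_{X_i|X_{\mathcal{N}_i}}$. $H$ denotes Shannon (conditional) entropy. *)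

theory Defs
  imports "HOL-Probability.Probability"
begin

definition nbrs :: "'v set set \<Rightarrow> 'v \<Rightarrow> 'v set" where
  "nbrs E i = {j. j \<noteq> i \<and> {i, j} \<in> E}"

definition agree_on :: "'v set \<Rightarrow> ('v \<Rightarrow> 'a) \<Rightarrow> ('v \<Rightarrow> 'a) set" where
  "agree_on S x = {z. \<forall>j\<in>S. z j = x j}"

definition cond_prob :: "('v \<Rightarrow> 'a) pmf \<Rightarrow> 'v \<Rightarrow> 'a \<Rightarrow> 'v set \<Rightarrow> ('v \<Rightarrow> 'a) \<Rightarrow> real" where
  "cond_prob q i a S x =
     measure_pmf.prob q ({z. z i = a} \<inter> agree_on S x) / measure_pmf.prob q (agree_on S x)"

definition markov_random_field :: "'v set \<Rightarrow> 'v set set \<Rightarrow> ('v \<Rightarrow> 'a) pmf \<Rightarrow> bool" where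
  "markov_random_field V E q \<longleftrightarrow>
     (\<forall>i\<in>V. \<forall>x a. measure_pmf.prob q (agree_on (V - {i}) x) > 0 \<longrightarrow>
        cond_prob q i a (V - {i}) x = cond_prob q i a (nbrs E i) x)"

text \<open>Shannon conditional entropy H(U | W) (in bits) of random variables U, W defined on
  a discrete probability space q (finite support assumed where used).\<close>
definition cond_entropy :: "'c pmf \<Rightarrow> ('c \<Rightarrow> 'u) \<Rightarrow> ('c \<Rightarrow> 'w) \<Rightarrow> real" where
  "cond_entropy q U W =
     (let J = map_pmf (\<lambda>z. (U z, W z)) q; M = map_pmf W q in
      (\<Sum>uw\<in>set_pmf J. pmf J uw * log 2 (pmf M (snd uw) / pmf J uw)))"

end

theory Submission
  imports Defs
begin

text \<open>
  Write \<open>P(\<cdot> | \<cdot>)\<close> for elementary conditional probabilities on the finite support of the law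
  of \<open>X\<close>, and \<open>N\<close> for the neighbourhood of \<open>i\<close>. Since \<open>Y\<^sub>N\<close> is a function of \<open>X\<^sub>N\<close>, the
  hypothesis \<open>H(Y\<^sub>i | Y\<^sub>N) = H(Y\<^sub>i | X\<^sub>N)\<close> is the equality case of \<open>H(Y\<^sub>i | Y\<^sub>N) \<ge> H(Y\<^sub>i | X\<^sub>N)\<close>,
  and applying \<open>ln t \<le> t - 1\<close> to the likelihood ratio of the two conditional laws shows that
  it forces \<open>P(Y\<^sub>i = a | X\<^sub>N) = P(Y\<^sub>i = a | Y\<^sub>N)\<close>. Summing the Markov property of \<open>X\<close> over the
  fibre of \<open>g\<^sub>i\<close> gives \<open>P(Y\<^sub>i = a | X\<^bsub>V-i\<^esub>) = P(Y\<^sub>i = a | X\<^sub>N)\<close>. Hence \<open>P(Y\<^sub>i = a | X\<^bsub>V-i\<^esub>)\<close> is a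
  function of \<open>Y\<^sub>N\<close>; since \<open>Y\<^sub>N\<close> is a function of \<open>Y\<^bsub>V-i\<^esub>\<close>, which is a function of \<open>X\<^bsub>V-i\<^esub>\<close>, the
  tower property turns this into \<open>P(Y\<^sub>i = a | Y\<^bsub>V-i\<^esub>) = P(Y\<^sub>i = a | Y\<^sub>N)\<close>.
\<close>

section \<open>Conditional expectation on a finite support\<close>

definition fiber :: "'c pmf \<Rightarrow> ('c \<Rightarrow> 'r) \<Rightarrow> 'c \<Rightarrow> 'c set" where
  "fiber q R x = {z \<in> set_pmf q. R z = R x}"

text \<open>\<open>pmf_cond_exp q R f x\<close> is \<open>E[f | R]\<close> evaluated at \<open>x\<close>. It is meaningful only for \<open>x\<close> in the
  support, where the denominator \<open>P(R = R x)\<close> is positive.\<close>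

definition pmf_cond_exp :: "'c pmf \<Rightarrow> ('c \<Rightarrow> 'r) \<Rightarrow> ('c \<Rightarrow> real) \<Rightarrow> 'c \<Rightarrow> real" where
  "pmf_cond_exp q R f x = (\<Sum>z\<in>fiber q R x. pmf q z * f z) / (\<Sum>z\<in>fiber q R x. pmf q z)"

definition pmf_cond_prob :: "'c pmf \<Rightarrow> ('c \<Rightarrow> 'r) \<Rightarrow> ('c \<Rightarrow> 'u) \<Rightarrow> 'u \<Rightarrow> 'c \<Rightarrow> real" where
  "pmf_cond_prob q R U u = pmf_cond_exp q R (\<lambda>z. of_bool (U z = u))"

definition determines :: "'c pmf \<Rightarrow> ('c \<Rightarrow> 'r) \<Rightarrow> ('c \<Rightarrow> 's) \<Rightarrow> bool" where
  "determines q R W \<longleftrightarrow> (\<forall>z\<in>set_pmf q. \<forall>z'\<in>set_pmf q. R z = R z' \<longrightarrow> W z = W z')"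

lemma finite_fiber: "finite (set_pmf q) \<Longrightarrow> finite (fiber q R x)"
  unfolding fiber_def by simp

lemma fiber_mass_pos:
  assumes "finite (set_pmf q)" and "x \<in> set_pmf q"
  shows "0 < (\<Sum>z\<in>fiber q R x. pmf q z)"
proof (rule sum_pos2[OF finite_fiber[OF assms(1)]])
  show "x \<in> fiber q R x" "0 < pmf q x"
    using assms(2) by (simp_all add: fiber_def pmf_positive)
qed simp

lemma pmf_cond_exp_cong_point: "R x = R x' \<Longrightarrow> pmf_cond_exp q R f x = pmf_cond_exp q R f x'"
  unfolding pmf_cond_exp_def fiber_def by simp

lemma pmf_cond_exp_cong:
  "(\<And>z. z \<in> set_pmf q \<Longrightarrow> f z = f' z) \<Longrightarrow> pmf_cond_exp q R f x = pmf_cond_exp q R f' x"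
  unfolding pmf_cond_exp_def fiber_def by (auto intro!: sum.cong)

lemma pmf_cond_exp_sum:
  "pmf_cond_exp q R (\<lambda>z. \<Sum>b\<in>B. f b z) x = (\<Sum>b\<in>B. pmf_cond_exp q R (f b) x)"
proof -
  have "(\<Sum>z\<in>fiber q R x. pmf q z * (\<Sum>b\<in>B. f b z))
      = (\<Sum>b\<in>B. \<Sum>z\<in>fiber q R x. pmf q z * f b z)"
    unfolding sum_distrib_left by (rule sum.swap)
  then show ?thesis unfolding pmf_cond_exp_def by (simp add: sum_divide_distrib)
qed

lemma pmf_cond_exp_mult_left:
  assumes "\<And>z. z \<in> set_pmf q \<Longrightarrow> R z = R x \<Longrightarrow> c z = c x"
  shows "pmf_cond_exp q R (\<lambda>z. c z * f z) x = c x * pmf_cond_exp q R f x"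
proof -
  have "(\<Sum>z\<in>fiber q R x. pmf q z * (c z * f z)) = c x * (\<Sum>z\<in>fiber q R x. pmf q z * f z)"
    unfolding sum_distrib_left by (rule sum.cong) (auto simp: fiber_def assms)
  then show ?thesis unfolding pmf_cond_exp_def by simp
qed

lemma pmf_cond_exp_const:
  assumes "finite (set_pmf q)" and "x \<in> set_pmf q"
    and "\<And>z. z \<in> set_pmf q \<Longrightarrow> R z = R x \<Longrightarrow> f z = c"
  shows "pmf_cond_exp q R f x = c"
proof -
  have "(\<Sum>z\<in>fiber q R x. pmf q z * f z) = (\<Sum>z\<in>fiber q R x. pmf q z) * c"
    unfolding sum_distrib_right by (rule sum.cong) (auto simp: fiber_def assms(3))
  then show ?thesis unfolding pmf_cond_exp_def using fiber_mass_pos[OF assms(1,2), of R] by simp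
qed

lemma pmf_cond_exp_nonneg: "(\<And>z. z \<in> set_pmf q \<Longrightarrow> 0 \<le> f z) \<Longrightarrow> 0 \<le> pmf_cond_exp q R f x"
  unfolding pmf_cond_exp_def fiber_def by (intro divide_nonneg_nonneg sum_nonneg) auto

lemma pmf_cond_exp_tower:
  assumes fin: "finite (set_pmf q)" and det: "determines q V R"
  shows "pmf_cond_exp q R (pmf_cond_exp q V f) x = pmf_cond_exp q R f x"
proof -
  let ?C = "fiber q R x"
  let ?K = "\<lambda>v. {z \<in> ?C. V z = v}"
  \<comment> \<open>The \<open>R\<close>-fibre of \<open>x\<close> splits into \<open>V\<close>-fibres, on each of which \<open>E[f | V]\<close> is constant.\<close>
  have fiber_V: "fiber q V z = ?K (V z)" if "z \<in> ?C" for z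
  proof (intro equalityI subsetI)
    fix z' assume "z' \<in> fiber q V z"
    then have z': "z' \<in> set_pmf q" "V z' = V z" by (simp_all add: fiber_def)
    moreover have "R z' = R z"
      using det z' that unfolding determines_def fiber_def by blast
    ultimately show "z' \<in> ?K (V z)" using that by (simp add: fiber_def)
  qed (simp add: fiber_def)
  have block: "(\<Sum>z\<in>?K v. pmf q z * pmf_cond_exp q V f z) = (\<Sum>z\<in>?K v. pmf q z * f z)"
    if "v \<in> V ` ?C" for v
  proof -
    let ?D = "\<Sum>z\<in>?K v. pmf q z" and ?S = "\<Sum>z\<in>?K v. pmf q z * f z"
    obtain z0 where z0: "z0 \<in> ?C" "V z0 = v" using \<open>v \<in> V ` ?C\<close> by blast
    then have "0 < ?D"
      using fiber_mass_pos[OF fin, of z0 V] fiber_V[OF z0(1)] by (simp add: fiber_def)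
    have "(\<Sum>z\<in>?K v. pmf q z * pmf_cond_exp q V f z) = (\<Sum>z\<in>?K v. pmf q z * (?S / ?D))"
      by (rule sum.cong) (use fiber_V in \<open>auto simp: pmf_cond_exp_def\<close>)
    also have "\<dots> = ?D * (?S / ?D)"
      by (rule sum_distrib_right[symmetric])
    finally show ?thesis using \<open>0 < ?D\<close> by simp
  qed
  have "(\<Sum>z\<in>?C. pmf q z * pmf_cond_exp q V f z)
      = (\<Sum>v\<in>V ` ?C. \<Sum>z\<in>?K v. pmf q z * pmf_cond_exp q V f z)"
    by (rule sum.image_gen[OF finite_fiber[OF fin]])
  also have "\<dots> = (\<Sum>v\<in>V ` ?C. \<Sum>z\<in>?K v. pmf q z * f z)"
    using block by simp
  also have "\<dots> = (\<Sum>z\<in>?C. pmf q z * f z)"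
    by (rule sum.image_gen[OF finite_fiber[OF fin], symmetric])
  finally show ?thesis unfolding pmf_cond_exp_def by simp
qed

lemma pmf_cond_exp_determined:
  assumes "finite (set_pmf q)" and "x \<in> set_pmf q" and "determines q R W"
  shows "pmf_cond_exp q R (pmf_cond_exp q W f) x = pmf_cond_exp q W f x"
proof (rule pmf_cond_exp_const[OF assms(1,2)])
  fix z assume "z \<in> set_pmf q" and "R z = R x"
  then have "W z = W x"
    using assms(2,3) unfolding determines_def by blast
  then show "pmf_cond_exp q W f z = pmf_cond_exp q W f x"
    by (rule pmf_cond_exp_cong_point)
qed

lemma pmf_cond_exp_eq_if_between:
  assumes fin: "finite (set_pmf q)" and x: "x \<in> set_pmf q"
    and "determines q V R" and "determines q R W"
    and "\<And>z. z \<in> set_pmf q \<Longrightarrow> pmf_cond_exp q V f z = pmf_cond_exp q W f z"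
  shows "pmf_cond_exp q R f x = pmf_cond_exp q W f x"
proof -
  have "pmf_cond_exp q R f x = pmf_cond_exp q R (pmf_cond_exp q V f) x"
    by (rule pmf_cond_exp_tower[symmetric]) fact+
  also have "\<dots> = pmf_cond_exp q R (pmf_cond_exp q W f) x"
    by (rule pmf_cond_exp_cong) fact
  also have "\<dots> = pmf_cond_exp q W f x"
    by (rule pmf_cond_exp_determined) fact+
  finally show ?thesis .
qed

lemma sum_pmf_mult_pmf_cond_exp:
  assumes "finite (set_pmf q)"
  shows "(\<Sum>z\<in>set_pmf q. pmf q z * pmf_cond_exp q V f z) = (\<Sum>z\<in>set_pmf q. pmf q z * f z)"
proof -
  have trivial: "pmf_cond_exp q (\<lambda>_. ()) g x = (\<Sum>z\<in>set_pmf q. pmf q z * g z)" for g and x :: 'a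
    unfolding pmf_cond_exp_def fiber_def using sum_pmf_eq_1[OF assms order_refl] by simp
  show ?thesis
    using pmf_cond_exp_tower[OF assms, of V "\<lambda>_. ()" f] by (simp add: trivial determines_def)
qed

lemma sum_mult_of_bool_eq_select:
  fixes c :: "'a \<Rightarrow> 'b::semiring_1"
  assumes "finite A" and "a \<in> A"
  shows "(\<Sum>b\<in>A. c b * of_bool (a = b)) = c a"
proof -
  have "(\<Sum>b\<in>A. c b * of_bool (a = b)) = (\<Sum>b\<in>A. if b = a then c b else 0)"
    by (rule sum.cong) auto
  then show ?thesis using assms by simp
qed

lemma measure_pmf_prob_eq_sum:
  "finite (set_pmf q) \<Longrightarrow> measure_pmf.prob q B = (\<Sum>z\<in>set_pmf q \<inter> B. pmf q z)"
  by (metis Int_commute finite_Int measure_Int_set_pmf measure_measure_pmf_finite)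

lemma pmf_cond_prob_eq_measure:
  assumes "finite (set_pmf q)"
  shows "pmf_cond_prob q R U u x
       = measure_pmf.prob q {z. U z = u \<and> R z = R x} / measure_pmf.prob q {z. R z = R x}"
proof -
  have "(\<Sum>z\<in>fiber q R x. pmf q z * of_bool (U z = u)) = (\<Sum>z\<in>fiber q R x \<inter> {z. U z = u}. pmf q z)"
    by (rule sum_mult_of_bool_eq[OF finite_fiber[OF assms]])
  moreover have "fiber q R x \<inter> {z. U z = u} = set_pmf q \<inter> {z. U z = u \<and> R z = R x}"
    and "fiber q R x = set_pmf q \<inter> {z. R z = R x}"
    unfolding fiber_def by auto
  ultimately show ?thesis
    unfolding pmf_cond_prob_def pmf_cond_exp_def measure_pmf_prob_eq_sum[OF assms] by simp
qed

lemma pmf_cond_prob_cong_point: "R x = R x' \<Longrightarrow> pmf_cond_prob q R U u x = pmf_cond_prob q R U u x'"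
  unfolding pmf_cond_prob_def by (rule pmf_cond_exp_cong_point)

lemma pmf_cond_prob_nonneg: "0 \<le> pmf_cond_prob q R U u x"
  unfolding pmf_cond_prob_def by (rule pmf_cond_exp_nonneg) simp

lemma pmf_cond_prob_self_pos:
  assumes "finite (set_pmf q)" and "x \<in> set_pmf q"
  shows "0 < pmf_cond_prob q R U (U x) x"
  unfolding pmf_cond_prob_eq_measure[OF assms(1)]
  using assms(2) by (auto intro!: divide_pos_pos measure_pmf_posI)

lemma pmf_cond_prob_eq_0:
  assumes "u \<notin> U ` set_pmf q"
  shows "pmf_cond_prob q R U u x = 0"
proof -
  have "\<And>z. z \<in> set_pmf q \<Longrightarrow> U z \<noteq> u"
    using assms by blast
  then show ?thesis
    unfolding pmf_cond_prob_def pmf_cond_exp_def fiber_def by (simp add: sum.neutral)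
qed

lemma sum_pmf_cond_prob_eq_1:
  assumes "finite (set_pmf q)" and "x \<in> set_pmf q"
  shows "(\<Sum>u\<in>U ` set_pmf q. pmf_cond_prob q R U u x) = 1"
proof -
  have "(\<Sum>u\<in>U ` set_pmf q. pmf_cond_prob q R U u x)
      = pmf_cond_exp q R (\<lambda>z. \<Sum>u\<in>U ` set_pmf q. of_bool (U z = u)) x"
    unfolding pmf_cond_prob_def by (rule pmf_cond_exp_sum[symmetric])
  also have "\<dots> = 1"
  proof (rule pmf_cond_exp_const[OF assms])
    fix z assume "z \<in> set_pmf q"
    have "(\<Sum>u\<in>U ` set_pmf q. of_bool (U z = u) :: real)
        = (\<Sum>u\<in>U ` set_pmf q. if u = U z then 1 else 0)"
      by (rule sum.cong) auto
    also have "\<dots> = 1"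
      using \<open>z \<in> set_pmf q\<close> assms(1) by simp
    finally show "(\<Sum>u\<in>U ` set_pmf q. of_bool (U z = u) :: real) = 1" .
  qed
  finally show ?thesis .
qed

section \<open>The equality case of conditioning reduces entropy\<close>

lemma sum_set_pmf_map_pmf:
  assumes "finite (set_pmf q)"
  shows "(\<Sum>y\<in>set_pmf (map_pmf h q). pmf (map_pmf h q) y * F y)
       = (\<Sum>x\<in>set_pmf q. pmf q x * F (h x))"
proof -
  have "(\<Sum>y\<in>set_pmf (map_pmf h q). pmf (map_pmf h q) y * F y)
      = measure_pmf.expectation (map_pmf h q) F"
    by (subst integral_measure_pmf_real[where A="set_pmf (map_pmf h q)"])
       (auto simp: assms mult.commute)
  also have "\<dots> = measure_pmf.expectation q (\<lambda>x. F (h x))"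
    by simp
  also have "\<dots> = (\<Sum>x\<in>set_pmf q. pmf q x * F (h x))"
    by (subst integral_measure_pmf_real[where A="set_pmf q"]) (auto simp: assms mult.commute)
  finally show ?thesis .
qed

lemma cond_entropy_eq_sum_log_pmf_cond_prob:
  assumes fin: "finite (set_pmf q)"
  shows "cond_entropy q U W = - (\<Sum>z\<in>set_pmf q. pmf q z * log 2 (pmf_cond_prob q W U (U z) z))"
proof -
  define J where "J = map_pmf (\<lambda>z. (U z, W z)) q"
  define M where "M = map_pmf W q"
  have ratio: "pmf M (W z) / pmf J (U z, W z) = inverse (pmf_cond_prob q W U (U z) z)" for z
  proof -
    have "(\<lambda>z'. (U z', W z')) -` {(U z, W z)} = {z'. U z' = U z \<and> W z' = W z}"
      and "W -` {W z} = {z'. W z' = W z}" by auto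
    then show ?thesis unfolding J_def M_def pmf_map pmf_cond_prob_eq_measure[OF fin] by simp
  qed
  have "cond_entropy q U W = (\<Sum>uw\<in>set_pmf J. pmf J uw * log 2 (pmf M (snd uw) / pmf J uw))"
    unfolding cond_entropy_def J_def M_def Let_def ..
  also have "\<dots> = (\<Sum>z\<in>set_pmf q. pmf q z * log 2 (pmf M (W z) / pmf J (U z, W z)))"
    using sum_set_pmf_map_pmf[OF fin, of "\<lambda>z. (U z, W z)"] by (simp add: J_def)
  also have "\<dots> = (\<Sum>z\<in>set_pmf q. - (pmf q z * log 2 (pmf_cond_prob q W U (U z) z)))"
    by (simp only: ratio log_inverse mult_minus_right)
  finally show ?thesis
    by (simp only: sum_negf)
qed

text \<open>Given \<open>V\<close>, the likelihood ratio has mean \<open>\<Sum> P(U = u | W)\<close> over the \<open>u\<close> with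
  \<open>P(U = u | V) > 0\<close>, which is at most \<open>1\<close>.\<close>

lemma pmf_cond_exp_likelihood_ratio_le_1:
  assumes fin: "finite (set_pmf q)" and det: "determines q V W" and z: "z \<in> set_pmf q"
  shows "pmf_cond_exp q V (\<lambda>z'. pmf_cond_prob q W U (U z') z' / pmf_cond_prob q V U (U z') z') z \<le> 1"
proof -
  let ?r = "\<lambda>u z'. pmf_cond_prob q W U u z' / pmf_cond_prob q V U u z'"
  have "pmf_cond_exp q V (\<lambda>z'. ?r (U z') z') z
      = pmf_cond_exp q V (\<lambda>z'. \<Sum>u\<in>U ` set_pmf q. ?r u z' * of_bool (U z' = u)) z"
    by (rule pmf_cond_exp_cong, rule sum_mult_of_bool_eq_select[symmetric]) (simp_all add: fin)
  also have "\<dots> = (\<Sum>u\<in>U ` set_pmf q. pmf_cond_exp q V (\<lambda>z'. ?r u z' * of_bool (U z' = u)) z)"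
    by (rule pmf_cond_exp_sum)
  also have "\<dots> = (\<Sum>u\<in>U ` set_pmf q. ?r u z * pmf_cond_prob q V U u z)"
  proof (rule sum.cong[OF refl])
    fix u
    have "?r u z' = ?r u z" if "z' \<in> set_pmf q" and "V z' = V z" for z'
    proof -
      have "W z' = W z" using det that z unfolding determines_def by blast
      have "pmf_cond_prob q W U u z' = pmf_cond_prob q W U u z"
        by (rule pmf_cond_prob_cong_point) fact
      moreover have "pmf_cond_prob q V U u z' = pmf_cond_prob q V U u z"
        by (rule pmf_cond_prob_cong_point) fact
      ultimately show ?thesis by simp
    qed
    from pmf_cond_exp_mult_left[where c="?r u", OF this]
    show "pmf_cond_exp q V (\<lambda>z'. ?r u z' * of_bool (U z' = u)) z = ?r u z * pmf_cond_prob q V U u z"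
      by (simp only: pmf_cond_prob_def)
  qed
  also have "\<dots> \<le> (\<Sum>u\<in>U ` set_pmf q. pmf_cond_prob q W U u z)"
  proof (rule sum_mono)
    fix u
    show "?r u z * pmf_cond_prob q V U u z \<le> pmf_cond_prob q W U u z"
      using pmf_cond_prob_nonneg[of q W U u z] by (cases "pmf_cond_prob q V U u z = 0") simp_all
  qed
  also have "\<dots> = 1"
    by (rule sum_pmf_cond_prob_eq_1[OF fin z])
  finally show ?thesis .
qed

lemma sum_pmf_mult_likelihood_ratio_le_1:
  assumes fin: "finite (set_pmf q)" and det: "determines q V W"
  shows "(\<Sum>z\<in>set_pmf q. pmf q z * (pmf_cond_prob q W U (U z) z / pmf_cond_prob q V U (U z) z)) \<le> 1"
proof -
  let ?r = "\<lambda>z. pmf_cond_prob q W U (U z) z / pmf_cond_prob q V U (U z) z"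
  have "(\<Sum>z\<in>set_pmf q. pmf q z * ?r z) = (\<Sum>z\<in>set_pmf q. pmf q z * pmf_cond_exp q V ?r z)"
    by (rule sum_pmf_mult_pmf_cond_exp[OF fin, symmetric])
  also have "\<dots> \<le> (\<Sum>z\<in>set_pmf q. pmf q z * 1)"
    by (intro sum_mono mult_left_mono pmf_cond_exp_likelihood_ratio_le_1[OF fin det]) simp_all
  also have "\<dots> = 1"
    using sum_pmf_eq_1[OF fin order_refl] by simp
  finally show ?thesis .
qed

lemma ln_mean_nonneg_imp_eq_1:
  assumes fin: "finite (set_pmf q)"
    and pos: "\<And>z. z \<in> set_pmf q \<Longrightarrow> 0 < t z"
    and mean: "(\<Sum>z\<in>set_pmf q. pmf q z * t z) \<le> 1"
    and ln_mean: "0 \<le> (\<Sum>z\<in>set_pmf q. pmf q z * ln (t z))"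
    and z: "z \<in> set_pmf q"
  shows "t z = 1"
proof -
  define d where "d z = pmf q z * (t z - 1 - ln (t z))" for z
  have d_nonneg: "0 \<le> d z" if "z \<in> set_pmf q" for z
    using ln_le_minus_one[OF pos[OF that]] unfolding d_def by simp
  have "(\<Sum>z\<in>set_pmf q. d z)
      = (\<Sum>z\<in>set_pmf q. pmf q z * t z) - (\<Sum>z\<in>set_pmf q. pmf q z)
        - (\<Sum>z\<in>set_pmf q. pmf q z * ln (t z))"
    unfolding d_def right_diff_distrib mult_1_right sum_subtractf ..
  also have "\<dots> \<le> 0"
    using mean ln_mean sum_pmf_eq_1[OF fin order_refl] by simp
  finally have "(\<Sum>z\<in>set_pmf q. d z) \<le> 0" .
  moreover have "0 \<le> (\<Sum>z\<in>set_pmf q. d z)"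
    using d_nonneg by (simp add: sum_nonneg)
  ultimately have "(\<Sum>z\<in>set_pmf q. d z) = 0" by linarith
  then have "d z = 0"
    using sum_nonneg_eq_0_iff[OF fin] d_nonneg z by blast
  then have "ln (t z) = t z - 1"
    using z by (simp add: d_def set_pmf_iff)
  then show ?thesis
    using ln_eq_minus_one pos[OF z] by blast
qed

lemma cond_entropy_eq_imp_pmf_cond_prob_self_eq:
  assumes fin: "finite (set_pmf q)" and det: "determines q V W"
    and ent: "cond_entropy q U W = cond_entropy q U V" and z: "z \<in> set_pmf q"
  shows "pmf_cond_prob q W U (U z) z = pmf_cond_prob q V U (U z) z"
proof -
  let ?PV = "\<lambda>z. pmf_cond_prob q V U (U z) z" and ?PW = "\<lambda>z. pmf_cond_prob q W U (U z) z"
  have ln_ratio: "pmf q z * ln (?PW z / ?PV z)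
                = ln 2 * (pmf q z * log 2 (?PW z)) - ln 2 * (pmf q z * log 2 (?PV z))"
    if "z \<in> set_pmf q" for z
  proof -
    have "ln (?PW z / ?PV z) = ln (?PW z) - ln (?PV z)"
      by (rule ln_divide_pos) (rule pmf_cond_prob_self_pos[OF fin that])+
    also have "\<dots> = ln 2 * log 2 (?PW z) - ln 2 * log 2 (?PV z)"
      by (simp add: log_def)
    finally have ln_eq: "ln (?PW z / ?PV z) = ln 2 * log 2 (?PW z) - ln 2 * log 2 (?PV z)" .
    show ?thesis unfolding ln_eq by (simp add: algebra_simps)
  qed
  have "(\<Sum>z\<in>set_pmf q. pmf q z * ln (?PW z / ?PV z))
      = ln 2 * (\<Sum>z\<in>set_pmf q. pmf q z * log 2 (?PW z))
        - ln 2 * (\<Sum>z\<in>set_pmf q. pmf q z * log 2 (?PV z))"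
    unfolding sum_distrib_left sum_subtractf[symmetric] by (rule sum.cong[OF refl ln_ratio])
  also have "\<dots> = 0"
    using ent unfolding cond_entropy_eq_sum_log_pmf_cond_prob[OF fin] by simp
  finally have ln_mean: "(\<Sum>z\<in>set_pmf q. pmf q z * ln (?PW z / ?PV z)) = 0" .
  have "?PW z / ?PV z = 1"
    by (rule ln_mean_nonneg_imp_eq_1[OF fin, where t="\<lambda>z. ?PW z / ?PV z",
          OF _ sum_pmf_mult_likelihood_ratio_le_1[OF fin det] _ z])
       (simp_all add: pmf_cond_prob_self_pos[OF fin] ln_mean)
  then show ?thesis
    using pmf_cond_prob_self_pos[OF fin z, of V U] by simp
qed

lemma cond_entropy_eq_imp_pmf_cond_prob_eq:
  assumes fin: "finite (set_pmf q)" and det: "determines q V W"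
    and ent: "cond_entropy q U W = cond_entropy q U V" and x: "x \<in> set_pmf q"
  shows "pmf_cond_prob q V U u x = pmf_cond_prob q W U u x"
proof (cases "u \<in> U ` set_pmf q")
  case True
  have le: "pmf_cond_prob q V U u' x \<le> pmf_cond_prob q W U u' x" for u'
  proof (cases "pmf_cond_prob q V U u' x = 0")
    case True
    then show ?thesis by (simp add: pmf_cond_prob_nonneg)
  next
    case False
    then have "measure_pmf.prob q {z. U z = u' \<and> V z = V x} \<noteq> 0"
      unfolding pmf_cond_prob_eq_measure[OF fin] by auto
    then obtain z where z: "z \<in> set_pmf q" "U z = u'" "V z = V x"
      unfolding measure_pmf_zero_iff by blast
    have "W z = W x" using det z(1,3) x unfolding determines_def by blast
    have "pmf_cond_prob q V U u' x = pmf_cond_prob q V U (U z) z"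
      unfolding z(2) by (rule pmf_cond_prob_cong_point) (simp add: z(3))
    also have "\<dots> = pmf_cond_prob q W U (U z) z"
      by (rule cond_entropy_eq_imp_pmf_cond_prob_self_eq[OF fin det ent z(1), symmetric])
    also have "\<dots> = pmf_cond_prob q W U u' x"
      unfolding z(2) by (rule pmf_cond_prob_cong_point) (simp add: \<open>W z = W x\<close>)
    finally show ?thesis by simp
  qed
  have "(\<Sum>u\<in>U ` set_pmf q. pmf_cond_prob q V U u x) = (\<Sum>u\<in>U ` set_pmf q. pmf_cond_prob q W U u x)"
    by (simp only: sum_pmf_cond_prob_eq_1[OF fin x])
  then show ?thesis
    by (rule sum_mono_inv[OF _ le True]) (simp add: fin)
next
  case False
  then show ?thesis by (simp add: pmf_cond_prob_eq_0)
qed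

section \<open>Functions of a Markov random field\<close>

lemma restrict_eq_restrict_iff: "restrict f A = restrict g A \<longleftrightarrow> (\<forall>x\<in>A. f x = g x)"
  by (metis restrict_apply' restrict_ext)

lemma determines_restrict:
  assumes "T \<subseteq> S"
  shows "determines q (\<lambda>z. \<lambda>j\<in>S. F j (z j)) (\<lambda>z. \<lambda>j\<in>T. G j (F j (z j)))"
  using assms unfolding determines_def restrict_eq_restrict_iff by auto

lemma cond_prob_cong:
  "(\<And>j. j \<in> T \<Longrightarrow> y j = y' j) \<Longrightarrow> cond_prob q i a T y = cond_prob q i a T y'"
  unfolding cond_prob_def agree_on_def by simp

lemma cond_prob_map_pmf:
  assumes "finite (set_pmf p)"
  shows "cond_prob (map_pmf Y p) i a T (Y x) = pmf_cond_prob p (\<lambda>z. restrict (Y z) T) (\<lambda>z. Y z i) a x"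
proof -
  have "Y -` agree_on T (Y x) = {z. restrict (Y z) T = restrict (Y x) T}"
    and "Y -` ({w. w i = a} \<inter> agree_on T (Y x))
       = {z. Y z i = a \<and> restrict (Y z) T = restrict (Y x) T}"
    unfolding agree_on_def restrict_eq_restrict_iff by auto
  then show ?thesis
    unfolding cond_prob_def pmf_cond_prob_eq_measure[OF assms] measure_map_pmf by simp
qed

lemma cond_prob_map_pmf_witness:
  assumes fin: "finite (set_pmf p)" and pos: "0 < measure_pmf.prob (map_pmf Y p) (agree_on S y)"
  obtains x where "x \<in> set_pmf p"
    and "\<And>T i a. T \<subseteq> S \<Longrightarrow>
           cond_prob (map_pmf Y p) i a T y = pmf_cond_prob p (\<lambda>z. restrict (Y z) T) (\<lambda>z. Y z i) a x"
proof -
  have "measure_pmf.prob p (Y -` agree_on S y) \<noteq> 0"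
    using pos by simp
  then obtain x where x: "x \<in> set_pmf p" and agree: "\<And>j. j \<in> S \<Longrightarrow> Y x j = y j"
    unfolding measure_pmf_zero_iff agree_on_def by blast
  have "cond_prob (map_pmf Y p) i a T y = pmf_cond_prob p (\<lambda>z. restrict (Y z) T) (\<lambda>z. Y z i) a x"
    if "T \<subseteq> S" for T i a
  proof -
    have "cond_prob (map_pmf Y p) i a T y = cond_prob (map_pmf Y p) i a T (Y x)"
      by (rule cond_prob_cong, rule agree[symmetric]) (use that in blast)
    also have "\<dots> = pmf_cond_prob p (\<lambda>z. restrict (Y z) T) (\<lambda>z. Y z i) a x"
      by (rule cond_prob_map_pmf[OF fin])
    finally show ?thesis .
  qed
  from x this show thesis by (rule that)
qed

lemma markov_random_field_pmf_cond_exp: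
  assumes fin: "finite (set_pmf p)" and mrf: "markov_random_field V E p"
    and i: "i \<in> V" and x: "x \<in> set_pmf p"
  shows "pmf_cond_exp p (\<lambda>z. restrict z (V - {i})) (\<lambda>z. f (z i)) x
       = pmf_cond_exp p (\<lambda>z. restrict z (nbrs E i)) (\<lambda>z. f (z i)) x"
proof -
  let ?B = "(\<lambda>z. z i) ` set_pmf p"
  have expand: "pmf_cond_exp p (\<lambda>z. restrict z T) (\<lambda>z. f (z i)) x
              = (\<Sum>b\<in>?B. f b * cond_prob p i b T x)" for T
  proof -
    have "pmf_cond_exp p (\<lambda>z. restrict z T) (\<lambda>z. f (z i)) x
        = pmf_cond_exp p (\<lambda>z. restrict z T) (\<lambda>z. \<Sum>b\<in>?B. f b * of_bool (z i = b)) x"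
      by (rule pmf_cond_exp_cong, rule sum_mult_of_bool_eq_select[symmetric]) (simp_all add: fin)
    also have "\<dots> = (\<Sum>b\<in>?B. f b * pmf_cond_exp p (\<lambda>z. restrict z T) (\<lambda>z. of_bool (z i = b)) x)"
      unfolding pmf_cond_exp_sum by (simp only: pmf_cond_exp_mult_left)
    also have "\<dots> = (\<Sum>b\<in>?B. f b * cond_prob p i b T x)"
      using cond_prob_map_pmf[OF fin, of "\<lambda>z. z"] by (simp add: pmf_cond_prob_def)
    finally show ?thesis .
  qed
  have "0 < measure_pmf.prob p (agree_on (V - {i}) x)"
    by (rule measure_pmf_posI[OF x]) (simp add: agree_on_def)
  then show ?thesis
    unfolding expand using mrf i unfolding markov_random_field_def by simp
qed

lemma pmf_cond_prob_image_rest_eq_image_nbrs: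
  assumes fin: "finite (set_pmf p)" and mrf: "markov_random_field V E p" and i: "i \<in> V"
    and ent: "cond_entropy p (\<lambda>x. g i (x i)) (\<lambda>x. \<lambda>j\<in>nbrs E i. g j (x j))
            = cond_entropy p (\<lambda>x. g i (x i)) (\<lambda>x. restrict x (nbrs E i))"
    and z: "z \<in> set_pmf p"
  shows "pmf_cond_prob p (\<lambda>x. restrict x (V - {i})) (\<lambda>x. g i (x i)) a z
       = pmf_cond_prob p (\<lambda>x. \<lambda>j\<in>nbrs E i. g j (x j)) (\<lambda>x. g i (x i)) a z"
proof -
  have "pmf_cond_prob p (\<lambda>x. restrict x (V - {i})) (\<lambda>x. g i (x i)) a z
      = pmf_cond_prob p (\<lambda>x. restrict x (nbrs E i)) (\<lambda>x. g i (x i)) a z"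
    unfolding pmf_cond_prob_def
    by (rule markov_random_field_pmf_cond_exp[OF fin mrf i z, where f="\<lambda>b. of_bool (g i b = a)"])
  also have "\<dots> = pmf_cond_prob p (\<lambda>x. \<lambda>j\<in>nbrs E i. g j (x j)) (\<lambda>x. g i (x i)) a z"
    by (rule cond_entropy_eq_imp_pmf_cond_prob_eq[OF fin determines_restrict[OF order_refl] ent z])
  finally show ?thesis .
qed

theorem proposition2:
  fixes N :: nat
    and E :: "nat set set"
    and A :: "nat \<Rightarrow> 'a set"
    and g :: "nat \<Rightarrow> 'a \<Rightarrow> 'b"
    and p :: "(nat \<Rightarrow> 'a) pmf"
  assumes edges: "\<forall>e\<in>E. e \<subseteq> {1..N} \<and> card e = 2"
    and alph_fin: "\<forall>i\<in>{1..N}. finite (A i)"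
    and support: "set_pmf p \<subseteq> PiE {1..N} A"
    and mrf: "markov_random_field {1..N} E p"
    and ent: "\<forall>i\<in>{1..N}.
       cond_entropy p (\<lambda>x. g i (x i)) (\<lambda>x. \<lambda>j\<in>nbrs E i. g j (x j))
     = cond_entropy p (\<lambda>x. g i (x i)) (\<lambda>x. restrict x (nbrs E i))"
  shows "markov_random_field {1..N} E (map_pmf (\<lambda>x j. g j (x j)) p)"
  unfolding markov_random_field_def
proof (intro ballI allI impI)
  let ?V = "{1..N}" and ?Y = "\<lambda>x j. g j (x j)"
  fix i y a
  assume i: "i \<in> ?V" and pos: "0 < measure_pmf.prob (map_pmf ?Y p) (agree_on (?V - {i}) y)"
  have fin: "finite (set_pmf p)"
    by (rule finite_subset[OF support], rule finite_PiE) (use alph_fin in auto)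
  have nbrs: "nbrs E i \<subseteq> ?V - {i}"
    using edges unfolding nbrs_def by auto
  obtain x0 where x0: "x0 \<in> set_pmf p"
    and reduce: "\<And>T. T \<subseteq> ?V - {i} \<Longrightarrow> cond_prob (map_pmf ?Y p) i a T y
                   = pmf_cond_prob p (\<lambda>z. restrict (?Y z) T) (\<lambda>z. g i (z i)) a x0"
    by (rule cond_prob_map_pmf_witness[OF fin pos]) blast
  have "pmf_cond_prob p (\<lambda>z. restrict (?Y z) (?V - {i})) (\<lambda>z. g i (z i)) a x0
      = pmf_cond_prob p (\<lambda>z. restrict (?Y z) (nbrs E i)) (\<lambda>z. g i (z i)) a x0"
    unfolding pmf_cond_prob_def
    by (rule pmf_cond_exp_eq_if_between[OF fin x0
          determines_restrict[OF order_refl, where F="\<lambda>j x. x"]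
          determines_restrict[OF nbrs, where G="\<lambda>j y. y"]])
       (rule pmf_cond_prob_image_rest_eq_image_nbrs[OF fin mrf i ent[rule_format, OF i],
          unfolded pmf_cond_prob_def])
  then show "cond_prob (map_pmf ?Y p) i a (?V - {i}) y = cond_prob (map_pmf ?Y p) i a (nbrs E i) y"
    using reduce[OF order_refl] reduce[OF nbrs] by simp
qed

end
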